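(* Let $A,B,C$ be real constants and, for a metric $g$ on an $n$-dimensional spacetime, set $$F = A\,R^{\alpha\beta\gamma\delta}R_{\alpha\beta\gamma\delta}+B\,R^{\alpha\beta}R_{\alpha\beta}+C\,R^{2},\qquad H^{\mu\nu}=\frac{1}{n-4}\,\frac{1}{\sqrt{|g|}}\,\frac{\delta}{\delta g_{\mu\nu}}\int F\sqrt{|g|}\,d^{n}x .$$ Suppose that, for every static spherically symmetric (SSS) metric $$ds^{2}=e^{\nu(r)}dt^{2}-e^{\lambda(r)}dr^{2}-r^{2}\,d\Omega^{2}_{n-2},$$ the quantity $H^{\mu\nu}$ has a finite limit as $n\to 4$. Then $(A,B,C)$ is proportional to the Gauss–Bonnet combination $(1,-4,1)$, i.e. $B=-4C$ and $A=C$; equivalently, $F$ is a multiple of $GB=R^{\alpha\beta\gamma\delta}R_{\alpha\beta\gamma\delta}-4R^{\alpha\beta}R_{\alpha\beta}+R^{2}$.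
   Context: This arises in the dimensional-regularization treatment of one-loop quantum corrections to gravity: the quantum correction term is $H^{\mu\nu}$ as defined, with $n$ regarded as a continuous dimension parameter near $4$. Writing $F\sqrt{|g|}$ evaluated on the SSS metric as $f_0+(n-4)f_1+O((n-4)^2)$, finiteness as $n\to4$ means the variational derivative (Euler–Lagrange expression with respect to $\nu$ and $\lambda$, total derivatives discarded) of the $O((n-4)^0)$ part vanishes. In the SSS metric, $\nu$ and $\lambda$ are arbitrary smooth functions of the radial coordinate $r$ and $d\Omega^2_{n-2}$ is the line element of the unit $(n-2)$-sphere; signature $(+,-,\dots,-)$. *)

theory Defs
  imports "HOL-Analysis.Analysis"
begin

text \<open>Curvature of the 4-dimensional static spherically symmetric (SSS) metric
  ds^2 = e^nu dt^2 - e^lam dr^2 - r^2 dOmega_2^2, expressed through the radial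
  jet (r, nu, nu', nu'', lam, lam', lam'').  In the orthonormal frame the Riemann
  tensor is pair-diagonal with mixed components
  R^{tr}_{tr} = K1, R^{t theta}_{t theta} = R^{t phi}_{t phi} = K2,
  R^{r theta}_{r theta} = R^{r phi}_{r phi} = K3, R^{theta phi}_{theta phi} = K4.\<close>

definition K1 :: "real \<Rightarrow> real \<Rightarrow> real \<Rightarrow> real \<Rightarrow> real \<Rightarrow> real \<Rightarrow> real" where
  "K1 r n1 n2 l0 l1 l2 = exp (- l0) * (n2 / 2 + n1^2 / 4 - n1 * l1 / 4)"
definition K2 :: "real \<Rightarrow> real \<Rightarrow> real \<Rightarrow> real" where
  "K2 r n1 l0 = exp (- l0) * n1 / (2 * r)"
definition K3 :: "real \<Rightarrow> real \<Rightarrow> real \<Rightarrow> real" where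
  "K3 r l0 l1 = - exp (- l0) * l1 / (2 * r)"
definition K4 :: "real \<Rightarrow> real \<Rightarrow> real" where
  "K4 r l0 = (exp (- l0) - 1) / r^2"

definition Riem_sq :: "real \<Rightarrow> real \<Rightarrow> real \<Rightarrow> real \<Rightarrow> real \<Rightarrow> real \<Rightarrow> real \<Rightarrow> real" where
  "Riem_sq r n0 n1 n2 l0 l1 l2 =
     4 * ((K1 r n1 n2 l0 l1 l2)^2 + 2 * (K2 r n1 l0)^2 + 2 * (K3 r l0 l1)^2 + (K4 r l0)^2)"
definition Ric_sq :: "real \<Rightarrow> real \<Rightarrow> real \<Rightarrow> real \<Rightarrow> real \<Rightarrow> real \<Rightarrow> real \<Rightarrow> real" where
  "Ric_sq r n0 n1 n2 l0 l1 l2 =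
     (K1 r n1 n2 l0 l1 l2 + 2 * K2 r n1 l0)^2 + (K1 r n1 n2 l0 l1 l2 + 2 * K3 r l0 l1)^2
     + 2 * (K2 r n1 l0 + K3 r l0 l1 + K4 r l0)^2"
definition Rscal :: "real \<Rightarrow> real \<Rightarrow> real \<Rightarrow> real \<Rightarrow> real \<Rightarrow> real \<Rightarrow> real \<Rightarrow> real" where
  "Rscal r n0 n1 n2 l0 l1 l2 =
     2 * (K1 r n1 n2 l0 l1 l2 + 2 * K2 r n1 l0 + 2 * K3 r l0 l1 + K4 r l0)"

text \<open>The order-(n-4)^0 part f0 of F sqrt|g| on the SSS metric, i.e. its value at n = 4,
  with the constant angular factor sin theta omitted (it does not affect the
  vanishing of the Euler--Lagrange expressions w.r.t. nu(r), lam(r)).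
  sqrt|g| = e^{(nu+lam)/2} r^2 (times sin theta).\<close>
definition f0 :: "real \<Rightarrow> real \<Rightarrow> real \<Rightarrow> real \<Rightarrow> real \<Rightarrow> real \<Rightarrow> real \<Rightarrow> real \<Rightarrow> real \<Rightarrow> real \<Rightarrow> real" where
  "f0 A B C r n0 n1 n2 l0 l1 l2 =
     (A * Riem_sq r n0 n1 n2 l0 l1 l2 + B * Ric_sq r n0 n1 n2 l0 l1 l2
      + C * (Rscal r n0 n1 n2 l0 l1 l2)^2) * exp ((n0 + l0) / 2) * r^2"

definition smooth_pos :: "(real \<Rightarrow> real) \<Rightarrow> bool" where
  "smooth_pos f \<longleftrightarrow> (\<forall>k. \<forall>x>0. ((deriv ^^ k) f) differentiable (at x))"

definition EL_nu :: "real \<Rightarrow> real \<Rightarrow> real \<Rightarrow> (real \<Rightarrow> real) \<Rightarrow> (real \<Rightarrow> real) \<Rightarrow> real \<Rightarrow> real" where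
  "EL_nu A B C nu lam r =
     deriv (\<lambda>x. f0 A B C r x (deriv nu r) (deriv (deriv nu) r)
                    (lam r) (deriv lam r) (deriv (deriv lam) r)) (nu r)
   - deriv (\<lambda>s. deriv (\<lambda>x. f0 A B C s (nu s) x (deriv (deriv nu) s)
                    (lam s) (deriv lam s) (deriv (deriv lam) s)) (deriv nu s)) r
   + deriv (deriv (\<lambda>s. deriv (\<lambda>x. f0 A B C s (nu s) (deriv nu s) x
                    (lam s) (deriv lam s) (deriv (deriv lam) s)) (deriv (deriv nu) s))) r"

definition EL_lam :: "real \<Rightarrow> real \<Rightarrow> real \<Rightarrow> (real \<Rightarrow> real) \<Rightarrow> (real \<Rightarrow> real) \<Rightarrow> real \<Rightarrow> real" where
  "EL_lam A B C nu lam r =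
     deriv (\<lambda>x. f0 A B C r (nu r) (deriv nu r) (deriv (deriv nu) r)
                    x (deriv lam r) (deriv (deriv lam) r)) (lam r)
   - deriv (\<lambda>s. deriv (\<lambda>x. f0 A B C s (nu s) (deriv nu s) (deriv (deriv nu) s)
                    (lam s) x (deriv (deriv lam) s)) (deriv lam s)) r
   + deriv (deriv (\<lambda>s. deriv (\<lambda>x. f0 A B C s (nu s) (deriv nu s) (deriv (deriv nu) s)
                    (lam s) (deriv lam s) x) (deriv (deriv lam) s))) r"

end

theory Submission imports Defs begin

text \<open>Test the finiteness condition on the metrics with \<open>\<nu> = 0\<close> and \<open>\<lambda>\<close> constant.
  Only the \<open>\<theta>\<phi>\<close>-curvature \<open>K4 = (e\<^sup>-\<^sup>\<lambda> - 1)/r\<^sup>2\<close> is then nonzero, and the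
  \<open>\<nu>\<close>-Euler--Lagrange expression becomes
  \<open>e\<^sup>\<lambda>\<^sup>/\<^sup>2 r\<^sup>-\<^sup>2 (e - 1)((a + b) e - a)\<close> with \<open>e = e\<^sup>-\<^sup>\<lambda>\<close>, \<open>a = 2A + B + 2C\<close>,
  \<open>b = 2B + 8C\<close>. Its vanishing for every constant \<open>\<lambda>\<close> forces \<open>a = b = 0\<close>.\<close>

lemmas f0_unfolded = f0_def Riem_sq_def Ric_sq_def Rscal_def K1_def K2_def K3_def K4_def

lemma smooth_pos_const: "smooth_pos (\<lambda>_. c)"
proof -
  have "(deriv ^^ k) (\<lambda>_. c) = (\<lambda>_. if k = 0 then c else 0)" for k
    by (induction k) auto
  then show ?thesis
    unfolding smooth_pos_def by simp
qed

lemma eventually_pos_nhds: "(r::real) > 0 \<Longrightarrow> eventually (\<lambda>s. s > 0) (nhds r)"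
  using eventually_nhds_in_open[of "{0<..}" r] by simp

lemma f0_has_derivative_nu:
  "((\<lambda>x. f0 A B C r x n1 n2 l0 l1 l2) has_real_derivative f0 A B C r n0 n1 n2 l0 l1 l2 / 2) (at n0)"
  unfolding f0_def Riem_sq_def Ric_sq_def Rscal_def
  by (auto intro!: derivative_eq_intros simp: field_simps exp_add[symmetric])

lemma f0_const_lam:
  assumes "r \<noteq> 0"
  shows "f0 A B C r 0 0 0 l 0 0 = 2 * (2*A + B + 2*C) * (exp (-l) - 1)^2 * exp (l/2) / r^2"
  using assms by (simp add: f0_unfolded field_simps power2_eq_square)

lemma f0_deriv_nu1_const_lam:
  assumes "r \<noteq> 0"
  shows "deriv (\<lambda>x. f0 A B C r 0 x 0 l 0 0) 0 =
     (2*B + 8*C) * exp (-l) * (exp (-l) - 1) * exp (l/2) / r"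
proof (rule DERIV_imp_deriv)
  show "((\<lambda>x. f0 A B C r 0 x 0 l 0 0) has_real_derivative
     (2*B + 8*C) * exp (-l) * (exp (-l) - 1) * exp (l/2) / r) (at 0)"
    using assms unfolding f0_unfolded
    by (auto intro!: derivative_eq_intros simp: field_simps power2_eq_square)
qed

lemma f0_deriv_nu2_const_lam:
  assumes "r \<noteq> 0"
  shows "deriv (\<lambda>x. f0 A B C r 0 0 x l 0 0) 0 = 4*C * exp (-l) * (exp (-l) - 1) * exp (l/2)"
proof (rule DERIV_imp_deriv)
  show "((\<lambda>x. f0 A B C r 0 0 x l 0 0) has_real_derivative
     4*C * exp (-l) * (exp (-l) - 1) * exp (l/2)) (at 0)"
    using assms unfolding f0_unfolded
    by (auto intro!: derivative_eq_intros simp: field_simps power2_eq_square)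
qed

lemma EL_nu_const_lam:
  assumes r: "r > 0"
  shows "EL_nu A B C (\<lambda>_. 0) (\<lambda>_. l) r =
    exp (l/2) / r^2 * ((2*A + B + 2*C) * (exp (-l) - 1)^2
       + (2*B + 8*C) * exp (-l) * (exp (-l) - 1))"
proof -
  define G where "G = (2*B + 8*C) * exp (-l) * (exp (-l) - 1) * exp (l/2)"
  have "deriv (\<lambda>x. f0 A B C r x 0 0 l 0 0) 0 = f0 A B C r 0 0 0 l 0 0 / 2"
    by (rule DERIV_imp_deriv[OF f0_has_derivative_nu])
  also have "\<dots> = (2*A + B + 2*C) * (exp (-l) - 1)^2 * exp (l/2) / r^2"
    using r by (simp add: f0_const_lam field_simps)
  finally have nu: "deriv (\<lambda>x. f0 A B C r x 0 0 l 0 0) 0 =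
      (2*A + B + 2*C) * (exp (-l) - 1)^2 * exp (l/2) / r^2" .
  have "deriv (\<lambda>s. deriv (\<lambda>x. f0 A B C s 0 x 0 l 0 0) 0) r = deriv (\<lambda>s. G / s) r"
    by (rule deriv_cong_ev[OF _ refl])
      (use eventually_pos_nhds[OF r] in \<open>eventually_elim, simp add: f0_deriv_nu1_const_lam G_def\<close>)
  also have "\<dots> = - G / r^2"
    by (rule DERIV_imp_deriv)
      (use r in \<open>auto intro!: derivative_eq_intros simp: power2_eq_square\<close>)
  finally have nu1: "deriv (\<lambda>s. deriv (\<lambda>x. f0 A B C s 0 x 0 l 0 0) 0) r = - G / r^2" .
  have "eventually (\<lambda>s. deriv (\<lambda>s. deriv (\<lambda>x. f0 A B C s 0 0 x l 0 0) 0) s = 0) (nhds r)"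
    using eventually_pos_nhds[OF r]
  proof eventually_elim
    case (elim s)
    have "deriv (\<lambda>s. deriv (\<lambda>x. f0 A B C s 0 0 x l 0 0) 0) s
        = deriv (\<lambda>_. 4*C * exp (-l) * (exp (-l) - 1) * exp (l/2)) s"
      by (rule deriv_cong_ev[OF _ refl])
        (use eventually_pos_nhds[OF elim] in \<open>eventually_elim, simp add: f0_deriv_nu2_const_lam\<close>)
    then show ?case by simp
  qed
  then have "deriv (deriv (\<lambda>s. deriv (\<lambda>x. f0 A B C s 0 0 x l 0 0) 0)) r = deriv (\<lambda>_. 0) r"
    by (rule deriv_cong_ev[OF _ refl])
  then have nu2: "deriv (deriv (\<lambda>s. deriv (\<lambda>x. f0 A B C s 0 0 x l 0 0) 0)) r = 0"
    by simp
  show ?thesis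
    unfolding EL_nu_def deriv_const
    using r by (simp add: nu nu1 nu2 G_def field_simps power2_eq_square)
qed

lemma quadratic_vanishing_on_pos:
  fixes a b :: real
  assumes "\<And>e. e > 0 \<Longrightarrow> a * (e - 1)^2 + b * e * (e - 1) = 0"
  shows "a = 0 \<and> b = 0"
  using assms[of "1/2"] assms[of 2] by (simp add: power2_eq_square)

theorem theorem2:
  fixes A B C :: real
  assumes finite_limit:
    "\<forall>nu lam. smooth_pos nu \<and> smooth_pos lam \<longrightarrow>
        (\<forall>r>0. EL_nu A B C nu lam r = 0 \<and> EL_lam A B C nu lam r = 0)"
  shows "B = -4 * C \<and> A = C"
proof -
  have vanish: "(2*A + B + 2*C) * (exp (-l) - 1)^2 + (2*B + 8*C) * exp (-l) * (exp (-l) - 1) = 0"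
    for l
  proof -
    have "EL_nu A B C (\<lambda>_. 0) (\<lambda>_. l) 1 = 0"
      using finite_limit smooth_pos_const by auto
    then show ?thesis
      using EL_nu_const_lam[of 1 A B C l] by simp
  qed
  have "(2*A + B + 2*C) * (e - 1)^2 + (2*B + 8*C) * e * (e - 1) = 0" if "e > 0" for e
    using vanish[of "- ln e"] that by simp
  then have "2*A + B + 2*C = 0 \<and> 2*B + 8*C = 0"
    by (rule quadratic_vanishing_on_pos)
  then show ?thesis by linarith
qed

end
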